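(* Let $(X,b,m)$ be a connected weighted graph satisfying conditions (B) and (M), let $V:X\to\mathbb{R}$ be bounded, and let $\lambda_V:=\inf\sigma(L_V)$. Let $D\subset X$ be relatively dense with covering radius $R$, and $\Omega:=X\setminus D$. If there exists a regular ground state of $L_V$ with bound $c$, then for all $f\in\ell^2(X,m)$ with $f=0$ on $D$, $$\mathcal{E}_V(f,f)\ge\left(\lambda_V+\frac{1}{c^4\cdot R\cdot\mathrm{vol}[c^2R]}\right)\|f\|^2 .$$
   Context: A weighted graph $(X,b,m)$: $X$ countable, $b:X\times X\to[0,\infty)$ symmetric with $b(x,x)=0$ and $\sum_y b(x,y)<\infty$, $m:X\to(0,\infty)$; $\mathrm{vol}(A):=\sum_{x\in A}m(x)$. Condition (B): $\sup_x\frac{1}{m(x)}\sum_y b(x,y)<\infty$. Condition (M): $\sup_x m(x)<\infty$. On $\ell^2(X,m)$ (norm $\|f\|^2=\sum_x|f(x)|^2m(x)$), $\mathcal{E}(f,g)=\frac12\sum_{x,y}b(x,y)(f(x)-f(y))(\overline{g(x)}-\overline{g(y)})$ and $\mathcal{E}_V(f,g):=\mathcal{E}(f,g)+\sum_x V(x)f(x)\overline{g(x)}$; $L_V$ is the associated bounded selfadjoint operator $(L_Vf)(x)=\frac{1}{m(x)}\left(\sum_y b(x,y)(f(x)-f(y))+V(x)f(x)\right)$. A ground state of $L_V$ is a function $\phi:X\to(0,\infty)$ with $\sum_y b(x,y)\phi(y)<\infty$ for all $x$ and $\frac{1}{m(x)}\left(\sum_y b(x,y)(\phi(x)-\phi(y))+V(x)\phi(x)\right)-\lambda_V\phi(x)\ge0$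 for all $x\in X$; it is regular with bound $c\ge1$ if $1/c\le\phi(x)\le c$ for all $x$. A path is $\gamma=(x_0,\dots,x_k)$ with $b(x_j,x_{j+1})>0$, of length $\sum_{j=0}^{k-1}1/b(x_j,x_{j+1})$; connected means any two points are joined by a path; $d(x,y)$ is the infimum of path lengths; $B_r(x):=\{y:d(x,y)\le r\}$; $\mathrm{vol}[s]:=\sup_{x}\mathrm{vol}(B_s(x))$. The covering radius of $D$ is $\inf\{R>0:\bigcup_{p\in D}B_R(p)=X\}$, and $D$ is relatively dense if it is finite. *)

theory Defs
  imports "HOL-Analysis.Analysis" "HOL-Library.Extended_Nonnegative_Real"
begin

text \<open>Weighted graph on the countable vertex type 'a (X = UNIV).\<close>

definition weighted_graph :: "('a::countable \<Rightarrow> 'a \<Rightarrow> real) \<Rightarrow> ('a \<Rightarrow> real) \<Rightarrow> bool" where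
  "weighted_graph b m \<longleftrightarrow>
     (\<forall>x y. b x y \<ge> 0) \<and> (\<forall>x y. b x y = b y x) \<and> (\<forall>x. b x x = 0) \<and>
     (\<forall>x. b x summable_on UNIV) \<and> (\<forall>x. m x > 0)"

definition cond_B :: "('a \<Rightarrow> 'a \<Rightarrow> real) \<Rightarrow> ('a \<Rightarrow> real) \<Rightarrow> bool" where
  "cond_B b m \<longleftrightarrow> (\<exists>C. \<forall>x. (\<Sum>\<^sub>\<infinity>y. b x y) / m x \<le> C)"

definition cond_M :: "('a \<Rightarrow> real) \<Rightarrow> bool" where
  "cond_M m \<longleftrightarrow> (\<exists>C. \<forall>x. m x \<le> C)"

definition is_path :: "('a \<Rightarrow> 'a \<Rightarrow> real) \<Rightarrow> 'a list \<Rightarrow> bool" where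
  "is_path b \<gamma> \<longleftrightarrow> \<gamma> \<noteq> [] \<and> (\<forall>j. Suc j < length \<gamma> \<longrightarrow> b (\<gamma> ! j) (\<gamma> ! Suc j) > 0)"

definition path_length :: "('a \<Rightarrow> 'a \<Rightarrow> real) \<Rightarrow> 'a list \<Rightarrow> real" where
  "path_length b \<gamma> = (\<Sum>j<length \<gamma> - 1. 1 / b (\<gamma> ! j) (\<gamma> ! Suc j))"

definition graph_connected :: "('a \<Rightarrow> 'a \<Rightarrow> real) \<Rightarrow> bool" where
  "graph_connected b \<longleftrightarrow>
     (\<forall>x y. \<exists>\<gamma>. is_path b \<gamma> \<and> hd \<gamma> = x \<and> last \<gamma> = y)"

definition gdist :: "('a \<Rightarrow> 'a \<Rightarrow> real) \<Rightarrow> 'a \<Rightarrow> 'a \<Rightarrow> real" where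
  "gdist b x y = Inf {path_length b \<gamma> | \<gamma>. is_path b \<gamma> \<and> hd \<gamma> = x \<and> last \<gamma> = y}"

definition gball :: "('a \<Rightarrow> 'a \<Rightarrow> real) \<Rightarrow> 'a \<Rightarrow> real \<Rightarrow> 'a set" where
  "gball b x r = {y. gdist b x y \<le> r}"

definition gvol :: "('a \<Rightarrow> real) \<Rightarrow> 'a set \<Rightarrow> ennreal" where
  "gvol m A = (\<Sum>\<^sub>\<infinity>x\<in>A. ennreal (m x))"

definition vol_sup :: "('a \<Rightarrow> 'a \<Rightarrow> real) \<Rightarrow> ('a \<Rightarrow> real) \<Rightarrow> real \<Rightarrow> ennreal" where
  "vol_sup b m s = (SUP x. gvol m (gball b x s))"

definition covering_radius :: "('a \<Rightarrow> 'a \<Rightarrow> real) \<Rightarrow> 'a set \<Rightarrow> real" where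
  "covering_radius b D = Inf {R. R > 0 \<and> (\<Union>p\<in>D. gball b p R) = UNIV}"

definition rel_dense :: "('a \<Rightarrow> 'a \<Rightarrow> real) \<Rightarrow> 'a set \<Rightarrow> bool" where
  "rel_dense b D \<longleftrightarrow> (\<exists>R>0. (\<Union>p\<in>D. gball b p R) = UNIV)"

definition l2 :: "('a \<Rightarrow> real) \<Rightarrow> ('a \<Rightarrow> complex) set" where
  "l2 m = {f. (\<lambda>x. (cmod (f x))\<^sup>2 * m x) summable_on UNIV}"

definition l2_norm_sq :: "('a \<Rightarrow> real) \<Rightarrow> ('a \<Rightarrow> complex) \<Rightarrow> real" where
  "l2_norm_sq m f = (\<Sum>\<^sub>\<infinity>x. (cmod (f x))\<^sup>2 * m x)"

text \<open>The form E_V(f,f) (diagonal of the sesquilinear form; real valued).\<close>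
definition energy_V :: "('a \<Rightarrow> 'a \<Rightarrow> real) \<Rightarrow> ('a \<Rightarrow> real) \<Rightarrow> ('a \<Rightarrow> complex) \<Rightarrow> real" where
  "energy_V b V f = (1/2) * (\<Sum>\<^sub>\<infinity>(x,y). b x y * (cmod (f x - f y))\<^sup>2) + (\<Sum>\<^sub>\<infinity>x. V x * (cmod (f x))\<^sup>2)"

definition L_op :: "('a \<Rightarrow> 'a \<Rightarrow> real) \<Rightarrow> ('a \<Rightarrow> real) \<Rightarrow> ('a \<Rightarrow> real) \<Rightarrow> ('a \<Rightarrow> complex) \<Rightarrow> 'a \<Rightarrow> complex" where
  "L_op b m V f x = (1 / of_real (m x)) *
     ((\<Sum>\<^sub>\<infinity>y. of_real (b x y) * (f x - f y)) + of_real (V x) * f x)"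

text \<open>Spectrum of L_V on l2(X,m): z such that L_V - z is not a bijection of l2(X,m)
  (for a bounded operator the inverse is then automatically bounded).\<close>
definition spectrum_L :: "('a \<Rightarrow> 'a \<Rightarrow> real) \<Rightarrow> ('a \<Rightarrow> real) \<Rightarrow> ('a \<Rightarrow> real) \<Rightarrow> complex set" where
  "spectrum_L b m V = {z. \<not> bij_betw (\<lambda>f x. L_op b m V f x - z * f x) (l2 m) (l2 m)}"

definition lambda_V :: "('a \<Rightarrow> 'a \<Rightarrow> real) \<Rightarrow> ('a \<Rightarrow> real) \<Rightarrow> ('a \<Rightarrow> real) \<Rightarrow> real" where
  "lambda_V b m V = Inf {t::real. complex_of_real t \<in> spectrum_L b m V}"

definition ground_state :: "('a \<Rightarrow> 'a \<Rightarrow> real) \<Rightarrow> ('a \<Rightarrow> real) \<Rightarrow> ('a \<Rightarrow> real) \<Rightarrow> ('a \<Rightarrow> real) \<Rightarrow> bool" where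
  "ground_state b m V \<phi> \<longleftrightarrow>
     (\<forall>x. \<phi> x > 0) \<and> (\<forall>x. (\<lambda>y. b x y * \<phi> y) summable_on UNIV) \<and>
     (\<forall>x. (1 / m x) * ((\<Sum>\<^sub>\<infinity>y. b x y * (\<phi> x - \<phi> y)) + V x * \<phi> x)
            - lambda_V b m V * \<phi> x \<ge> 0)"

definition regular_ground_state :: "('a \<Rightarrow> 'a \<Rightarrow> real) \<Rightarrow> ('a \<Rightarrow> real) \<Rightarrow> ('a \<Rightarrow> real) \<Rightarrow> ('a \<Rightarrow> real) \<Rightarrow> real \<Rightarrow> bool" where
  "regular_ground_state b m V \<phi> c \<longleftrightarrow>
     ground_state b m V \<phi> \<and> c \<ge> 1 \<and> (\<forall>x. 1 / c \<le> \<phi> x \<and> \<phi> x \<le> c)"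

end

theory Submission
  imports Defs
begin

text \<open>Write f = \<phi> g. The ground state transform turns E_V(f) - \<lambda>_V \<parallel>f\<parallel>^2 into
  1/2 \<Sum> b(x,y) \<phi>(x) \<phi>(y) |g(x) - g(y)|^2 plus a term that is nonnegative because \<phi> is a
  supersolution, and this is at least 1/(2 c^2) times the Dirichlet energy of g. Since g vanishes
  on D, every x outside D is the end of a simple path starting in D of length at most the covering
  radius R, and Cauchy-Schwarz along this path bounds |g(x)|^2 by R times the energy of g on its
  edges. Summing against m, an edge is used (in at most one orientation) only by paths of points
  in the ball of radius R around it, which gives the Hardy inequality
  \<Sum> m |g|^2 \<le> R vol[R] / 2 \<Sum> b |\<nabla>g|^2. Finally \<parallel>f\<parallel>^2 \<le> c^2 \<Sum> m |g|^2 and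
  vol[R] \<le> vol[c^2 R].\<close>

section \<open>Paths and their lengths\<close>

lemma is_path_iff_successively:
  "is_path b \<gamma> \<longleftrightarrow> \<gamma> \<noteq> [] \<and> successively (\<lambda>x y. b x y > 0) \<gamma>"
  by (simp add: is_path_def successively_conv_nth)

lemma is_path_singleton [simp]: "is_path b [x]"
  by (simp add: is_path_iff_successively)

lemma is_path_Cons_Cons [simp]: "is_path b (x # y # \<gamma>) \<longleftrightarrow> b x y > 0 \<and> is_path b (y # \<gamma>)"
  by (simp add: is_path_iff_successively)

lemma is_path_append_iff:
  "is_path b (xs @ y # ys) \<longleftrightarrow> is_path b (xs @ [y]) \<and> is_path b (y # ys)"
  by (induction xs rule: induct_list012) auto

lemma path_length_Nil [simp]: "path_length b [] = 0"
  by (simp add: path_length_def)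

lemma path_length_singleton [simp]: "path_length b [x] = 0"
  by (simp add: path_length_def)

lemma path_length_Cons_Cons [simp]:
  "path_length b (x # y # \<gamma>) = 1 / b x y + path_length b (y # \<gamma>)"
  unfolding path_length_def by (simp add: sum.lessThan_Suc_shift del: sum.lessThan_Suc)

lemma path_length_append:
  "path_length b (xs @ y # ys) = path_length b (xs @ [y]) + path_length b (y # ys)"
  by (induction xs rule: induct_list012) auto

lemma path_length_nonneg:
  assumes "\<And>x y. b x y \<ge> 0"
  shows "path_length b \<gamma> \<ge> 0"
  by (induction \<gamma> rule: induct_list012) (simp_all add: assms)

lemma path_length_ge_last_edge:
  assumes "\<And>x y. b x y \<ge> 0"
  shows "1 / b y z \<le> path_length b (xs @ [y, z])"
  using path_length_append[of b xs y "[z]"] path_length_nonneg[of b "xs @ [y]"] assms by simp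

lemma path_last_edge:
  assumes "is_path b \<gamma>" and "tl \<gamma> \<noteq> []"
  obtains xs y where "\<gamma> = xs @ [y, last \<gamma>]" and "is_path b (xs @ [y])" and "b y (last \<gamma>) > 0"
proof -
  have ne: "\<gamma> \<noteq> []" "butlast \<gamma> \<noteq> []"
    using assms by (auto simp: is_path_def) (cases \<gamma>; auto)
  define xs where "xs = butlast (butlast \<gamma>)"
  define y where "y = last (butlast \<gamma>)"
  have \<gamma>: "\<gamma> = xs @ [y, last \<gamma>]"
    using append_butlast_last_id[OF ne(1)] append_butlast_last_id[OF ne(2)]
    unfolding xs_def y_def by (metis append.assoc append_Cons append_Nil)
  show thesis
    using that[OF \<gamma>] assms(1) is_path_append_iff[of b xs y "[last \<gamma>]"] \<gamma> by simp
qed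

lemma path_length_ge_length:
  assumes "\<And>x y. b x y \<le> K" and "K > 0" and "is_path b \<gamma>"
  shows "(real (length \<gamma>) - 1) / K \<le> path_length b \<gamma>"
  using assms(3)
proof (induction \<gamma> rule: induct_list012)
  case (3 x y \<gamma>)
  have "1 / K \<le> 1 / b x y"
    using 3 assms(1) by (simp add: frac_le)
  with 3 show ?case by (simp add: add_divide_distrib diff_divide_distrib)
qed (use assms(2) in auto)

lemma finite_superlevel_set_summable:
  fixes f :: "'b \<Rightarrow> real"
  assumes "\<And>y. f y \<ge> 0" and "f summable_on UNIV" and "\<epsilon> > 0"
  shows "finite {y. f y \<ge> \<epsilon>}"
proof (rule ccontr)
  assume "infinite {y. f y \<ge> \<epsilon>}"
  then obtain A where A: "finite A" "card A = nat \<lceil>infsum f UNIV / \<epsilon>\<rceil> + 1" "A \<subseteq> {y. f y \<ge> \<epsilon>}"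
    using infinite_arbitrarily_large by blast
  have "real (card A) * \<epsilon> \<le> sum f A"
    using A by (intro sum_bounded_below) auto
  also have "\<dots> \<le> infsum f UNIV"
    using A assms by (intro finite_sum_le_infsum) auto
  finally have "real (card A) \<le> infsum f UNIV / \<epsilon>"
    using assms(3) by (simp add: field_simps)
  with A(2) show False by linarith
qed

text \<open>Summability of the weights leaves only finitely many edges of weight at least 1 / L at
  each vertex, and the last edge of a path of length at most L is such an edge.\<close>

lemma finite_bounded_paths_to:
  assumes b_nonneg: "\<And>x y. b x y \<ge> 0" and b_sym: "\<And>x y. b x y = b y x"
    and b_summable: "\<And>x. b x summable_on UNIV" and "L > 0"
  shows "finite {\<gamma>. is_path b \<gamma> \<and> last \<gamma> = z \<and> length \<gamma> \<le> n \<and> path_length b \<gamma> \<le> L}"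
proof (induction n arbitrary: z)
  case 0
  then show ?case by (simp add: is_path_def)
next
  case (Suc n)
  let ?P = "\<lambda>n z. {\<gamma>. is_path b \<gamma> \<and> last \<gamma> = z \<and> length \<gamma> \<le> n \<and> path_length b \<gamma> \<le> L}"
  have "?P (Suc n) z \<subseteq> {[z]} \<union> (\<Union>y\<in>{y. b z y \<ge> 1 / L}. (\<lambda>\<gamma>. \<gamma> @ [z]) ` ?P n y)"
  proof
    fix \<gamma> assume \<gamma>: "\<gamma> \<in> ?P (Suc n) z"
    show "\<gamma> \<in> {[z]} \<union> (\<Union>y\<in>{y. b z y \<ge> 1 / L}. (\<lambda>\<gamma>. \<gamma> @ [z]) ` ?P n y)"
    proof (cases "tl \<gamma> = []")
      case True
      with \<gamma> show ?thesis by (cases \<gamma>) (auto simp: is_path_def)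
    next
      case False
      then obtain xs y where \<gamma>_split: "\<gamma> = xs @ [y, z]" "is_path b (xs @ [y])" "b y z > 0"
        using path_last_edge[of b \<gamma>] \<gamma> by auto
      have "path_length b (xs @ [y]) + 1 / b y z \<le> L"
        using \<gamma> \<gamma>_split(1) path_length_append[of b xs y "[z]"] by simp
      moreover have "path_length b (xs @ [y]) \<ge> 0" and "1 / b y z > 0"
        using path_length_nonneg[of b, OF b_nonneg] \<gamma>_split(3) by auto
      ultimately have "path_length b (xs @ [y]) \<le> L" and "1 / b y z \<le> L"
        by linarith+
      then have "b z y \<ge> 1 / L" and "xs @ [y] \<in> ?P n y"
        using \<gamma>_split \<gamma> \<open>L > 0\<close> b_sym[of y z] by (auto simp: field_simps)
      with \<gamma>_split(1) show ?thesis by force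
    qed
  qed
  moreover have "finite {y. b z y \<ge> 1 / L}"
    using finite_superlevel_set_summable[of "b z" "1 / L"] b_nonneg b_summable \<open>L > 0\<close> by auto
  ultimately show ?case
    using Suc.IH by (meson finite_UN_I finite_Un finite_imageI finite_insert finite.emptyI
        finite_subset)
qed

section \<open>Short simple paths from the dense set\<close>

lemma exists_distinct_path:
  assumes b_nonneg: "\<And>x y. b x y \<ge> 0" and "is_path b \<gamma>"
  shows "\<exists>\<delta>. is_path b \<delta> \<and> distinct \<delta> \<and> hd \<delta> = hd \<gamma> \<and> last \<delta> = last \<gamma>
           \<and> path_length b \<delta> \<le> path_length b \<gamma>"
  using assms(2)
proof (induction "length \<gamma>" arbitrary: \<gamma> rule: less_induct)
  case less
  show ?case
  proof (cases "distinct \<gamma>")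
    case True
    with less.prems show ?thesis by blast
  next
    case False
    then obtain xs ys zs y where \<gamma>: "\<gamma> = xs @ [y] @ ys @ [y] @ zs"
      using not_distinct_decomp by blast
    let ?\<delta> = "xs @ y # zs"
    have "is_path b (xs @ y # (ys @ y # zs))"
      using less.prems \<gamma> by simp
    then have "is_path b (xs @ [y])" "is_path b ((y # ys) @ y # zs)"
      using is_path_append_iff[of b xs y "ys @ y # zs"] by simp_all
    then have "is_path b ?\<delta>"
      using is_path_append_iff[of b xs y zs] is_path_append_iff[of b "y # ys" y zs] by blast
    moreover have "length ?\<delta> < length \<gamma>"
      using \<gamma> by simp
    ultimately obtain \<delta> where \<delta>: "is_path b \<delta>" "distinct \<delta>" "hd \<delta> = hd ?\<delta>" "last \<delta> = last ?\<delta>"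
      "path_length b \<delta> \<le> path_length b ?\<delta>"
      using less.hyps by blast
    have "hd ?\<delta> = hd \<gamma>" "last ?\<delta> = last \<gamma>"
      unfolding \<gamma> by (cases xs; simp) (cases zs; simp)
    moreover have "path_length b ?\<delta> \<le> path_length b \<gamma>"
    proof -
      have "path_length b \<gamma> = path_length b (xs @ [y]) + path_length b ((y # ys) @ y # zs)"
        using path_length_append[of b xs y "ys @ y # zs"] \<gamma> by simp
      also have "\<dots> = path_length b ?\<delta> + path_length b ((y # ys) @ [y])"
        using path_length_append[of b "y # ys" y zs] path_length_append[of b xs y zs] by simp
      finally show ?thesis
        using path_length_nonneg[of b "(y # ys) @ [y]", OF b_nonneg] by linarith
    qed
    ultimately show ?thesis
      using \<delta> by auto
  qed
qed

lemma gdist_le_path_length: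
  assumes "\<And>x y. b x y \<ge> 0" and "is_path b \<gamma>"
  shows "gdist b (hd \<gamma>) (last \<gamma>) \<le> path_length b \<gamma>"
  unfolding gdist_def
proof (rule cInf_lower)
  show "bdd_below {path_length b \<delta> | \<delta>. is_path b \<delta> \<and> hd \<delta> = hd \<gamma> \<and> last \<delta> = last \<gamma>}"
    using path_length_nonneg[of b, OF assms(1)] by (auto intro: bdd_belowI[of _ 0])
qed (use assms(2) in blast)

lemma gdist_le_path_length_from_vertex:
  assumes "\<And>x y. b x y \<ge> 0" and "is_path b \<gamma>" and "u \<in> set \<gamma>"
  shows "gdist b u (last \<gamma>) \<le> path_length b \<gamma>"
proof -
  obtain xs ys where \<gamma>: "\<gamma> = xs @ u # ys"
    using split_list[OF assms(3)] by blast
  have "is_path b (u # ys)"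
    using assms(2) is_path_append_iff[of b xs u ys] \<gamma> by blast
  then have "gdist b u (last \<gamma>) \<le> path_length b (u # ys)"
    using gdist_le_path_length[of b "u # ys", OF assms(1)] \<gamma> by simp
  also have "\<dots> \<le> path_length b \<gamma>"
    using path_length_append[of b xs u ys] path_length_nonneg[of b, OF assms(1)] \<gamma> by simp
  finally show ?thesis .
qed

lemma exists_path_shorter_than_gdist:
  assumes "graph_connected b" and "\<epsilon> > 0"
  shows "\<exists>\<gamma>. is_path b \<gamma> \<and> hd \<gamma> = x \<and> last \<gamma> = y \<and> path_length b \<gamma> < gdist b x y + \<epsilon>"
proof -
  have "{path_length b \<gamma> | \<gamma>. is_path b \<gamma> \<and> hd \<gamma> = x \<and> last \<gamma> = y} \<noteq> {}"
    using assms(1) unfolding graph_connected_def by blast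
  from cInf_lessD[OF this, of "gdist b x y + \<epsilon>"] assms(2) show ?thesis
    unfolding gdist_def by auto
qed

lemma covering_radius_nonneg:
  assumes "rel_dense b D"
  shows "covering_radius b D \<ge> 0"
  using assms unfolding covering_radius_def rel_dense_def
  by (intro cInf_greatest) auto

lemma exists_close_point_of_dense_set:
  assumes "rel_dense b D" and "\<epsilon> > 0"
  shows "\<exists>p\<in>D. gdist b p x < covering_radius b D + \<epsilon>"
proof -
  have "{R. R > 0 \<and> (\<Union>p\<in>D. gball b p R) = UNIV} \<noteq> {}"
    using assms(1) unfolding rel_dense_def by blast
  from cInf_lessD[OF this, of "covering_radius b D + \<epsilon>"] obtain R
    where "(\<Union>p\<in>D. gball b p R) = UNIV" and R: "R < covering_radius b D + \<epsilon>"
    using assms(2) unfolding covering_radius_def by auto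
  then have "x \<in> (\<Union>p\<in>D. gball b p R)"
    by simp
  with R show ?thesis
    unfolding gball_def by force
qed

lemma exists_path_from_dense_set:
  assumes "graph_connected b" and "rel_dense b D" and "\<epsilon> > 0"
  shows "\<exists>\<gamma>. is_path b \<gamma> \<and> hd \<gamma> \<in> D \<and> last \<gamma> = x \<and> path_length b \<gamma> < covering_radius b D + \<epsilon>"
proof -
  obtain p where p: "p \<in> D" "gdist b p x < covering_radius b D + \<epsilon> / 2"
    using exists_close_point_of_dense_set[OF assms(2), of "\<epsilon> / 2"] assms(3) by auto
  obtain \<gamma> where "is_path b \<gamma>" "hd \<gamma> = p" "last \<gamma> = x" "path_length b \<gamma> < gdist b p x + \<epsilon> / 2"
    using exists_path_shorter_than_gdist[OF assms(1), of "\<epsilon> / 2"] assms(3) by auto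
  with p show ?thesis
    by (intro exI[of _ \<gamma>]) auto
qed

lemma finite_short_paths_to:
  assumes b_nonneg: "\<And>x y. b x y \<ge> 0" and b_sym: "\<And>x y. b x y = b y x"
    and b_summable: "\<And>x. b x summable_on UNIV"
    and b_bounded: "\<And>x y. b x y \<le> K" and "K > 0" and "L > 0"
  shows "finite {\<gamma>. is_path b \<gamma> \<and> last \<gamma> = z \<and> path_length b \<gamma> \<le> L}"
proof (rule finite_subset)
  define n where "n = nat \<lceil>L * K\<rceil> + 1"
  show "{\<gamma>. is_path b \<gamma> \<and> last \<gamma> = z \<and> path_length b \<gamma> \<le> L}
      \<subseteq> {\<gamma>. is_path b \<gamma> \<and> last \<gamma> = z \<and> length \<gamma> \<le> n \<and> path_length b \<gamma> \<le> L}"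
  proof safe
    fix \<gamma> assume "is_path b \<gamma>" "path_length b \<gamma> \<le> L"
    then have "(real (length \<gamma>) - 1) / K \<le> L"
      using path_length_ge_length[OF b_bounded \<open>K > 0\<close>] by force
    then show "length \<gamma> \<le> n"
      using \<open>K > 0\<close> unfolding n_def by (simp add: field_simps) linarith
  qed
  show "finite {\<gamma>. is_path b \<gamma> \<and> last \<gamma> = z \<and> length \<gamma> \<le> n \<and> path_length b \<gamma> \<le> L}"
    using finite_bounded_paths_to[OF b_nonneg b_sym b_summable \<open>L > 0\<close>] .
qed

text \<open>The infimum defining the covering radius is attained because only finitely many candidate
  paths of length at most R + 1 end at x.\<close>

lemma exists_path_within_covering_radius:
  assumes b_nonneg: "\<And>x y. b x y \<ge> 0" and b_sym: "\<And>x y. b x y = b y x"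
    and b_summable: "\<And>x. b x summable_on UNIV"
    and b_bounded: "\<And>x y. b x y \<le> K" and "K > 0"
    and connected: "graph_connected b" and dense: "rel_dense b D"
  shows "\<exists>\<gamma>. is_path b \<gamma> \<and> hd \<gamma> \<in> D \<and> last \<gamma> = x \<and> path_length b \<gamma> \<le> covering_radius b D"
proof -
  define R where "R = covering_radius b D"
  define P where "P = {\<gamma>. is_path b \<gamma> \<and> hd \<gamma> \<in> D \<and> last \<gamma> = x \<and> path_length b \<gamma> \<le> R + 1}"
  have short: "\<exists>\<gamma>\<in>P. path_length b \<gamma> < R + \<epsilon>" if "0 < \<epsilon>" "\<epsilon> \<le> 1" for \<epsilon>
    using exists_path_from_dense_set[OF connected dense \<open>0 < \<epsilon>\<close>, of x] that
    unfolding P_def R_def by force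
  have "finite P"
    using finite_short_paths_to[OF b_nonneg b_sym b_summable b_bounded \<open>K > 0\<close>, of "R + 1" x]
      covering_radius_nonneg[OF dense]
    unfolding P_def R_def by (auto elim: finite_subset[rotated])
  moreover have "P \<noteq> {}"
    using short[of 1] by auto
  ultimately have min: "Min (path_length b ` P) \<in> path_length b ` P"
    and min_le: "\<And>\<delta>. \<delta> \<in> P \<Longrightarrow> Min (path_length b ` P) \<le> path_length b \<delta>"
    by auto
  have "Min (path_length b ` P) \<le> R"
  proof (rule field_le_epsilon)
    fix \<epsilon> :: real assume "\<epsilon> > 0"
    then obtain \<delta> where "\<delta> \<in> P" "path_length b \<delta> < R + min \<epsilon> 1"
      using short[of "min \<epsilon> 1"] by auto
    then show "Min (path_length b ` P) \<le> R + \<epsilon>"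
      using min_le[of \<delta>] by linarith
  qed
  with min show ?thesis
    unfolding P_def R_def by auto
qed

definition connecting_paths :: "('a \<Rightarrow> 'a \<Rightarrow> real) \<Rightarrow> 'a set \<Rightarrow> real \<Rightarrow> ('a \<Rightarrow> 'a list) \<Rightarrow> bool" where
  "connecting_paths b D R \<gamma> \<longleftrightarrow>
     (\<forall>x. x \<notin> D \<longrightarrow> is_path b (\<gamma> x) \<and> distinct (\<gamma> x) \<and> hd (\<gamma> x) \<in> D \<and> last (\<gamma> x) = x
        \<and> path_length b (\<gamma> x) \<le> R)"

lemma connecting_paths_exist:
  assumes "\<And>x y. b x y \<ge> 0" and "\<And>x y. b x y = b y x" and "\<And>x. b x summable_on UNIV"
    and "\<And>x y. b x y \<le> K" and "K > 0" and "graph_connected b" and "rel_dense b D"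
  shows "\<exists>\<gamma>. connecting_paths b D (covering_radius b D) \<gamma>"
proof -
  have "\<exists>\<delta>. is_path b \<delta> \<and> distinct \<delta> \<and> hd \<delta> \<in> D \<and> last \<delta> = x
          \<and> path_length b \<delta> \<le> covering_radius b D" for x
  proof -
    obtain \<gamma> where \<gamma>: "is_path b \<gamma>" "hd \<gamma> \<in> D" "last \<gamma> = x" "path_length b \<gamma> \<le> covering_radius b D"
      using exists_path_within_covering_radius[OF assms] by blast
    then obtain \<delta> where "is_path b \<delta>" "distinct \<delta>" "hd \<delta> = hd \<gamma>" "last \<delta> = last \<gamma>"
        "path_length b \<delta> \<le> path_length b \<gamma>"
      using exists_distinct_path[of b, OF assms(1)] by blast
    with \<gamma> show ?thesis
      by (intro exI[of _ \<delta>]) auto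
  qed
  then show ?thesis
    unfolding connecting_paths_def by metis
qed

section \<open>A Hardy inequality\<close>

definition path_edges :: "'a list \<Rightarrow> ('a \<times> 'a) set" where
  "path_edges \<gamma> = set (zip \<gamma> (tl \<gamma>))"

lemma path_edges_Nil [simp]: "path_edges [] = {}"
  and path_edges_singleton [simp]: "path_edges [x] = {}"
  and path_edges_Cons_Cons [simp]: "path_edges (x # y # \<gamma>) = insert (x, y) (path_edges (y # \<gamma>))"
  by (simp_all add: path_edges_def)

lemma finite_path_edges [simp]: "finite (path_edges \<gamma>)"
  by (simp add: path_edges_def)

lemma path_edges_subset: "(u, v) \<in> path_edges \<gamma> \<Longrightarrow> u \<in> set \<gamma> \<and> v \<in> set \<gamma>"
  by (induction \<gamma> rule: induct_list012) auto

lemma distinct_path_edges_not_reversed: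
  "distinct \<gamma> \<Longrightarrow> (u, v) \<in> path_edges \<gamma> \<Longrightarrow> (v, u) \<notin> path_edges \<gamma>"
  by (induction \<gamma> rule: induct_list012) (auto dest: path_edges_subset)

lemma sq_add_le_weighted:
  fixes d e P E B :: real
  assumes "d \<ge> 0" "e \<ge> 0" "P \<ge> 0" "E \<ge> 0" "B > 0" "d\<^sup>2 \<le> P * E"
  shows "(d + e)\<^sup>2 \<le> (1 / B + P) * (B * e\<^sup>2 + E)"
proof -
  have am_gm: "4 * x * y \<le> (x + y)\<^sup>2" for x y :: real
    using zero_le_power2[of "x - y"] by (simp add: power2_eq_square algebra_simps)
  have "(2 * d * e)\<^sup>2 = 4 * d\<^sup>2 * e\<^sup>2"
    by (simp add: power_mult_distrib)
  also have "\<dots> \<le> 4 * (P * E) * e\<^sup>2"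
    using assms(6) by (simp add: mult_right_mono)
  also have "\<dots> = 4 * (E / B) * (P * B * e\<^sup>2)"
    using assms(5) by simp
  also have "\<dots> \<le> (E / B + P * B * e\<^sup>2)\<^sup>2"
    by (rule am_gm)
  finally have "(2 * d * e)\<^sup>2 \<le> (E / B + P * B * e\<^sup>2)\<^sup>2" .
  moreover have "0 \<le> E / B + P * B * e\<^sup>2"
    using assms by simp
  ultimately have "2 * d * e \<le> E / B + P * B * e\<^sup>2"
    by (rule power2_le_imp_le)
  moreover have "(1 / B + P) * (B * e\<^sup>2 + E) = e\<^sup>2 + E / B + P * B * e\<^sup>2 + P * E"
    using assms(5) by (simp add: field_simps)
  ultimately show ?thesis
    using assms(6) by (simp add: power2_sum)
qed

lemma norm_diff_sq_le_path_length_mult_energy: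
  fixes g :: "'a \<Rightarrow> 'b::real_normed_vector"
  assumes b_nonneg: "\<And>x y. b x y \<ge> 0" and "is_path b \<gamma>" and "distinct \<gamma>"
  shows "(norm (g (last \<gamma>) - g (hd \<gamma>)))\<^sup>2
           \<le> path_length b \<gamma> * (\<Sum>(u, v)\<in>path_edges \<gamma>. b u v * (norm (g u - g v))\<^sup>2)"
  using assms(2,3)
proof (induction \<gamma> rule: induct_list012)
  case (3 x y \<gamma>)
  let ?E = "\<lambda>\<gamma>. \<Sum>(u, v)\<in>path_edges \<gamma>. b u v * (norm (g u - g v))\<^sup>2"
  have edge_new: "(x, y) \<notin> path_edges (y # \<gamma>)"
    using "3.prems"(2) path_edges_subset by force
  have "norm (g (last (y # \<gamma>)) - g x) \<le> norm (g (last (y # \<gamma>)) - g y) + norm (g x - g y)"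
    using norm_triangle_ineq4[of "g (last (y # \<gamma>)) - g y" "g x - g y"] by (simp add: algebra_simps)
  then have "(norm (g (last (x # y # \<gamma>)) - g (hd (x # y # \<gamma>))))\<^sup>2
      \<le> (norm (g (last (y # \<gamma>)) - g y) + norm (g x - g y))\<^sup>2"
    by (simp add: power_mono)
  also have "\<dots> \<le> (1 / b x y + path_length b (y # \<gamma>)) * (b x y * (norm (g x - g y))\<^sup>2 + ?E (y # \<gamma>))"
    using "3" path_length_nonneg[of b, OF b_nonneg] b_nonneg
    by (intro sq_add_le_weighted) (auto intro: sum_nonneg)
  also have "\<dots> = path_length b (x # y # \<gamma>) * ?E (x # y # \<gamma>)"
    using edge_new by simp
  finally show ?case .
qed (auto simp: is_path_def)

lemma connecting_paths_pointwise_bound: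
  fixes g :: "'a \<Rightarrow> 'b::real_normed_vector"
  assumes "\<And>x y. b x y \<ge> 0" and paths: "connecting_paths b D R \<gamma>"
    and g_D: "\<And>p. p \<in> D \<Longrightarrow> g p = 0" and "x \<notin> D"
  shows "(norm (g x))\<^sup>2 \<le> R * (\<Sum>(u, v)\<in>path_edges (\<gamma> x). b u v * (norm (g u - g v))\<^sup>2)"
proof -
  have \<gamma>: "is_path b (\<gamma> x)" "distinct (\<gamma> x)" "hd (\<gamma> x) \<in> D" "last (\<gamma> x) = x"
    "path_length b (\<gamma> x) \<le> R"
    using paths \<open>x \<notin> D\<close> unfolding connecting_paths_def by auto
  have "(norm (g x))\<^sup>2 = (norm (g (last (\<gamma> x)) - g (hd (\<gamma> x))))\<^sup>2"
    using \<gamma> g_D by simp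
  also have "\<dots> \<le> path_length b (\<gamma> x) * (\<Sum>(u, v)\<in>path_edges (\<gamma> x). b u v * (norm (g u - g v))\<^sup>2)"
    using norm_diff_sq_le_path_length_mult_energy[of b, OF assms(1) \<gamma>(1,2)] .
  also have "\<dots> \<le> R * (\<Sum>(u, v)\<in>path_edges (\<gamma> x). b u v * (norm (g u - g v))\<^sup>2)"
    using \<gamma>(5) assms(1) by (intro mult_right_mono sum_nonneg) auto
  finally show ?thesis .
qed

lemma connecting_paths_edge_multiplicity:
  assumes "\<And>x y. b x y \<ge> 0" and paths: "connecting_paths b D R \<gamma>"
    and "finite F" and "F \<inter> D = {}"
    and vol: "\<And>p A. finite A \<Longrightarrow> A \<subseteq> gball b p R \<Longrightarrow> sum m A \<le> Vol"
  shows "(\<Sum>x\<in>{x\<in>F. (u, v) \<in> path_edges (\<gamma> x)}. m x) + (\<Sum>x\<in>{x\<in>F. (v, u) \<in> path_edges (\<gamma> x)}. m x)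
           \<le> Vol"
proof -
  let ?A = "{x\<in>F. (u, v) \<in> path_edges (\<gamma> x)}" and ?B = "{x\<in>F. (v, u) \<in> path_edges (\<gamma> x)}"
  have \<gamma>: "is_path b (\<gamma> x)" "distinct (\<gamma> x)" "last (\<gamma> x) = x" "path_length b (\<gamma> x) \<le> R"
    if "x \<in> F" for x
    using paths that \<open>F \<inter> D = {}\<close> unfolding connecting_paths_def by auto
  have "x \<notin> ?B" if "x \<in> ?A" for x
  proof -
    from that have "x \<in> F" "(u, v) \<in> path_edges (\<gamma> x)"
      by auto
    then show ?thesis
      using distinct_path_edges_not_reversed[OF \<gamma>(2)] by auto
  qed
  then have "?A \<inter> ?B = {}"
    by blast
  moreover have "?A \<union> ?B \<subseteq> gball b u R"
  proof
    fix x assume x: "x \<in> ?A \<union> ?B"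
    then have "u \<in> set (\<gamma> x)" and "x \<in> F"
      by (auto dest: path_edges_subset)
    then have "gdist b u (last (\<gamma> x)) \<le> path_length b (\<gamma> x)"
      using gdist_le_path_length_from_vertex[of b, OF assms(1) \<gamma>(1)] by blast
    then show "x \<in> gball b u R"
      using \<gamma>(3,4) \<open>x \<in> F\<close> unfolding gball_def by force
  qed
  ultimately show ?thesis
    using vol[of "?A \<union> ?B" u] \<open>finite F\<close> by (simp add: sum.union_disjoint)
qed

lemma sum_symmetrize_swap:
  fixes W T :: "'a \<times> 'a \<Rightarrow> real"
  assumes "prod.swap ` U = U" and "\<And>e. W (prod.swap e) = W e"
  shows "2 * (\<Sum>e\<in>U. W e * T e) = (\<Sum>e\<in>U. W e * (T e + T (prod.swap e)))"
proof -
  have "(\<Sum>e\<in>U. W e * T (prod.swap e)) = (\<Sum>e\<in>prod.swap ` U. W e * T e)"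
    using assms(2) by (simp add: sum.reindex)
  also have "\<dots> = (\<Sum>e\<in>U. W e * T e)"
    using assms(1) by simp
  finally show ?thesis
    by (simp add: distrib_left sum.distrib)
qed

text \<open>Exchange the two sums and pair every edge with its reverse: the points whose paths use an
  edge in either orientation have total mass at most Vol.\<close>

lemma connecting_paths_double_counting:
  fixes W :: "'a \<times> 'a \<Rightarrow> real"
  assumes b_nonneg: "\<And>x y. b x y \<ge> 0" and paths: "connecting_paths b D R \<gamma>"
    and "finite F" and "F \<inter> D = {}" and m_nonneg: "\<And>x. m x \<ge> 0"
    and vol: "\<And>p A. finite A \<Longrightarrow> A \<subseteq> gball b p R \<Longrightarrow> sum m A \<le> Vol"
    and W_nonneg: "\<And>e. W e \<ge> 0" and W_swap: "\<And>e. W (prod.swap e) = W e"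
    and W_summable: "W summable_on UNIV"
  shows "(\<Sum>x\<in>F. \<Sum>e\<in>path_edges (\<gamma> x). m x * W e) \<le> Vol / 2 * infsum W UNIV"
proof -
  define U where "U = (\<Union>x\<in>F. path_edges (\<gamma> x))"
  define U' where "U' = U \<union> prod.swap ` U"
  define T where "T e = (\<Sum>x\<in>{x\<in>F. e \<in> path_edges (\<gamma> x)}. m x)" for e
  have "finite U'"
    using \<open>finite F\<close> unfolding U'_def U_def by auto
  have "Vol \<ge> 0"
    using vol[of "{}"] by simp
  have "(\<Sum>x\<in>F. \<Sum>e\<in>path_edges (\<gamma> x). m x * W e)
      = (\<Sum>x\<in>F. \<Sum>e\<in>{e\<in>U. e \<in> path_edges (\<gamma> x)}. m x * W e)"
    unfolding U_def by (intro sum.cong) auto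
  also have "\<dots> = (\<Sum>e\<in>U. W e * T e)"
    unfolding T_def using \<open>finite F\<close> \<open>finite U'\<close> U'_def
    by (subst sum.swap_restrict) (auto simp: sum_distrib_left mult_ac)
  also have "\<dots> \<le> (\<Sum>e\<in>U'. W e * T e)"
    unfolding U'_def T_def using \<open>finite U'\<close> W_nonneg m_nonneg
    by (intro sum_mono2 mult_nonneg_nonneg sum_nonneg) (auto simp: U'_def)
  also have "\<dots> = (\<Sum>e\<in>U'. W e * (T e + T (prod.swap e))) / 2"
  proof -
    have "prod.swap ` U' = U'"
      unfolding U'_def by (auto simp: image_Un image_image)
    from sum_symmetrize_swap[of U' W T, OF this W_swap] show ?thesis
      by simp
  qed
  also have "\<dots> \<le> (\<Sum>e\<in>U'. W e * Vol) / 2"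
  proof -
    have "T (u, v) + T (v, u) \<le> Vol" for u v
      unfolding T_def
      by (rule connecting_paths_edge_multiplicity) (use b_nonneg paths assms(3,4) vol in auto)
    then show ?thesis
      using W_nonneg by (intro divide_right_mono sum_mono mult_left_mono) auto
  qed
  also have "\<dots> = Vol / 2 * sum W U'"
    by (simp add: sum_distrib_left mult_ac)
  also have "\<dots> \<le> Vol / 2 * infsum W UNIV"
    using finite_sum_le_infsum[OF W_summable, of U'] W_nonneg \<open>finite U'\<close> \<open>Vol \<ge> 0\<close>
    by (intro mult_left_mono) auto
  finally show ?thesis .
qed

lemma hardy_inequality:
  fixes g :: "'a \<Rightarrow> 'b::real_normed_vector"
  assumes b_nonneg: "\<And>x y. b x y \<ge> 0" and b_sym: "\<And>x y. b x y = b y x"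
    and m_nonneg: "\<And>x. m x \<ge> 0" and "R \<ge> 0"
    and paths: "connecting_paths b D R \<gamma>" and g_D: "\<And>p. p \<in> D \<Longrightarrow> g p = 0"
    and vol: "\<And>p A. finite A \<Longrightarrow> A \<subseteq> gball b p R \<Longrightarrow> sum m A \<le> Vol"
    and energy_summable: "(\<lambda>(x, y). b x y * (norm (g x - g y))\<^sup>2) summable_on UNIV"
    and mass_summable: "(\<lambda>x. (norm (g x))\<^sup>2 * m x) summable_on UNIV"
  shows "(\<Sum>\<^sub>\<infinity>x. (norm (g x))\<^sup>2 * m x) \<le> R * Vol / 2 * (\<Sum>\<^sub>\<infinity>(x, y). b x y * (norm (g x - g y))\<^sup>2)"
proof -
  define W where "W = (\<lambda>(x, y). b x y * (norm (g x - g y))\<^sup>2)"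
  have W_nonneg: "W e \<ge> 0" and W_swap: "W (prod.swap e) = W e" for e
    using b_nonneg b_sym by (simp_all add: W_def norm_minus_commute split: prod.splits)
  have W_summable: "W summable_on UNIV"
    using energy_summable by (simp add: W_def)
  have "(\<Sum>x\<in>F. (norm (g x))\<^sup>2 * m x) \<le> R * Vol / 2 * infsum W UNIV" if "finite F" for F
  proof -
    have "(\<Sum>x\<in>F. (norm (g x))\<^sup>2 * m x) = (\<Sum>x\<in>F - D. (norm (g x))\<^sup>2 * m x)"
      using that g_D by (intro sum.mono_neutral_right) auto
    also have "\<dots> \<le> (\<Sum>x\<in>F - D. (R * (\<Sum>e\<in>path_edges (\<gamma> x). W e)) * m x)"
      using connecting_paths_pointwise_bound[of b, OF b_nonneg paths g_D] m_nonneg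
      unfolding W_def by (intro sum_mono mult_right_mono) auto
    also have "\<dots> = R * (\<Sum>x\<in>F - D. \<Sum>e\<in>path_edges (\<gamma> x). m x * W e)"
      by (simp add: sum_distrib_left mult_ac)
    also have "\<dots> \<le> R * (Vol / 2 * infsum W UNIV)"
      using \<open>R \<ge> 0\<close>
    proof (rule mult_left_mono[rotated])
      show "(\<Sum>x\<in>F - D. \<Sum>e\<in>path_edges (\<gamma> x). m x * W e) \<le> Vol / 2 * infsum W UNIV"
        by (rule connecting_paths_double_counting)
          (use b_nonneg paths that m_nonneg vol W_nonneg W_swap W_summable in auto)
    qed
    finally show ?thesis
      by (simp add: mult_ac)
  qed
  then show ?thesis
    using mass_summable by (intro infsum_le_finite_sums) (auto simp: W_def)
qed

lemma sum_le_vol_sup: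
  assumes "\<And>x. m x \<ge> 0" and "vol_sup b m s < top" and "r \<le> s"
    and "finite A" and "A \<subseteq> gball b p r"
  shows "sum m A \<le> enn2real (vol_sup b m s)"
proof -
  have "ennreal (sum m A) = (\<Sum>\<^sub>\<infinity>x\<in>A. ennreal (m x))"
    using assms(1,4) by (simp add: sum_ennreal)
  also have "\<dots> \<le> gvol m (gball b p s)"
    unfolding gvol_def using assms(3,5)
    by (intro infsum_mono_neutral nonneg_summable_on_complete) (auto simp: gball_def)
  also have "\<dots> \<le> vol_sup b m s"
    unfolding vol_sup_def by (rule SUP_upper) simp
  finally have "ennreal (sum m A) \<le> vol_sup b m s" .
  from enn2real_mono[OF this assms(2)] show ?thesis
    using assms(1) by (simp add: sum_nonneg)
qed

lemma hardy_inequality_vol_sup: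
  fixes g :: "'a \<Rightarrow> 'b::real_normed_vector"
  assumes "\<And>x y. b x y \<ge> 0" and "\<And>x y. b x y = b y x" and "\<And>x. m x \<ge> 0"
    and "R \<ge> 0" and "R \<le> s" and "vol_sup b m s < top"
    and "connecting_paths b D R \<gamma>" and "\<And>p. p \<in> D \<Longrightarrow> g p = 0"
    and "(\<lambda>(x, y). b x y * (norm (g x - g y))\<^sup>2) summable_on UNIV"
    and "(\<lambda>x. (norm (g x))\<^sup>2 * m x) summable_on UNIV"
  shows "(\<Sum>\<^sub>\<infinity>x. (norm (g x))\<^sup>2 * m x)
           \<le> R * enn2real (vol_sup b m s) / 2 * (\<Sum>\<^sub>\<infinity>(x, y). b x y * (norm (g x - g y))\<^sup>2)"
proof (rule hardy_inequality)
  show "sum m A \<le> enn2real (vol_sup b m s)" if "finite A" and "A \<subseteq> gball b p R" for p A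
    using sum_le_vol_sup[OF assms(3,6,5) that] .
qed (use assms in auto)

section \<open>The ground state transform\<close>

lemma norm_diff_sq_le:
  fixes u v :: "'b::real_normed_vector"
  shows "(norm (u - v))\<^sup>2 \<le> 2 * (norm u)\<^sup>2 + 2 * (norm v)\<^sup>2"
proof -
  have "(norm (u - v))\<^sup>2 \<le> (norm u + norm v)\<^sup>2"
    using norm_triangle_ineq4[of u v] by (simp add: power_mono)
  also have "\<dots> \<le> 2 * (norm u)\<^sup>2 + 2 * (norm v)\<^sup>2"
    using sum_squares_bound[of "norm u" "norm v"] by (simp add: power2_sum)
  finally show ?thesis .
qed

lemma summable_edge_weighted:
  fixes a :: "'a \<Rightarrow> real"
  assumes b_nonneg: "\<And>x y. b x y \<ge> 0" and b_summable: "\<And>x. b x summable_on UNIV"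
    and degree: "\<And>x. (\<Sum>\<^sub>\<infinity>y. b x y) \<le> C * m x"
    and a_nonneg: "\<And>x. a x \<ge> 0" and a_summable: "(\<lambda>x. a x * m x) summable_on UNIV"
  shows "(\<lambda>(x, y). b x y * a x) summable_on UNIV"
proof -
  have "(\<lambda>(x, y). b x y * a x) summable_on Sigma UNIV (\<lambda>_. UNIV)"
  proof (rule summable_on_SigmaI)
    show "((\<lambda>y. case (x, y) of (x, y) \<Rightarrow> b x y * a x) has_sum (\<Sum>\<^sub>\<infinity>y. b x y) * a x) UNIV" for x
      using has_sum_cmult_left[OF has_sum_infsum[OF b_summable]] by simp
    show "(\<lambda>x. (\<Sum>\<^sub>\<infinity>y. b x y) * a x) summable_on UNIV"
    proof (rule summable_on_comparison_test)
      show "(\<lambda>x. C * (a x * m x)) summable_on UNIV"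
        using a_summable by (rule summable_on_cmult_right)
      show "(\<Sum>\<^sub>\<infinity>y. b x y) * a x \<le> C * (a x * m x)" for x
        using mult_right_mono[OF degree a_nonneg] by (simp add: mult_ac)
      show "0 \<le> (\<Sum>\<^sub>\<infinity>y. b x y) * a x" for x
        using b_nonneg a_nonneg by (simp add: infsum_nonneg)
    qed
  qed (use b_nonneg a_nonneg in simp)
  then show ?thesis
    by simp
qed

lemma summable_edge_weighted_swap:
  assumes "\<And>x y. b x y = b y x" and "(\<lambda>(x, y). b x y * a x) summable_on UNIV"
  shows "(\<lambda>(x, y). b x y * a y) summable_on UNIV"
  using assms(2) summable_on_swap[of "\<lambda>(x, y). b x y * a x" UNIV UNIV] assms(1) by simp

lemma summable_dirichlet_energy:
  fixes f :: "'a \<Rightarrow> 'b::real_normed_vector"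
  assumes b_nonneg: "\<And>x y. b x y \<ge> 0" and b_sym: "\<And>x y. b x y = b y x"
    and b_summable: "\<And>x. b x summable_on UNIV"
    and degree: "\<And>x. (\<Sum>\<^sub>\<infinity>y. b x y) \<le> C * m x"
    and f_l2: "(\<lambda>x. (norm (f x))\<^sup>2 * m x) summable_on UNIV"
  shows "(\<lambda>(x, y). b x y * (norm (f x - f y))\<^sup>2) summable_on UNIV"
proof (rule summable_on_comparison_test)
  have left: "(\<lambda>(x, y). b x y * (norm (f x))\<^sup>2) summable_on UNIV"
    using summable_edge_weighted[of b, OF b_nonneg b_summable degree _ f_l2] by simp
  have right: "(\<lambda>(x, y). b x y * (norm (f y))\<^sup>2) summable_on UNIV"
    using summable_edge_weighted_swap[of b, OF b_sym left] .
  show "(\<lambda>(x, y). 2 * (b x y * (norm (f x))\<^sup>2) + 2 * (b x y * (norm (f y))\<^sup>2)) summable_on UNIV"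
    using summable_on_add[OF summable_on_cmult_right[OF left, of 2] summable_on_cmult_right[OF right, of 2]]
    by (simp add: case_prod_unfold)
  show "(case z of (x, y) \<Rightarrow> b x y * (norm (f x - f y))\<^sup>2)
      \<le> (case z of (x, y) \<Rightarrow> 2 * (b x y * (norm (f x))\<^sup>2) + 2 * (b x y * (norm (f y))\<^sup>2))" for z
    using mult_left_mono[OF norm_diff_sq_le b_nonneg] by (auto simp: algebra_simps split: prod.splits)
  show "0 \<le> (case z of (x, y) \<Rightarrow> b x y * (norm (f x - f y))\<^sup>2)" for z
    using b_nonneg by (simp split: prod.splits)
qed

lemma norm_of_real_mult_diff_sq:
  fixes u v :: complex and p q :: real
  shows "(cmod (of_real p * u - of_real q * v))\<^sup>2
           = p * q * (cmod (u - v))\<^sup>2 + p * (p - q) * (cmod u)\<^sup>2 + q * (q - p) * (cmod v)\<^sup>2"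
  by (simp only: cmod_power2) (simp add: power2_eq_square algebra_simps)

lemma ground_state_cross_term:
  fixes g :: "'a \<Rightarrow> complex"
  assumes b_nonneg: "\<And>x y. b x y \<ge> 0" and b_summable: "\<And>x. b x summable_on UNIV"
    and degree: "\<And>x. (\<Sum>\<^sub>\<infinity>y. b x y) \<le> C * m x"
    and \<phi>_pos: "\<And>x. \<phi> x > 0" and \<phi>_le: "\<And>x. \<phi> x \<le> c"
    and \<phi>_summable: "\<And>x. (\<lambda>y. b x y * \<phi> y) summable_on UNIV"
    and g_l2: "(\<lambda>x. (cmod (g x))\<^sup>2 * m x) summable_on UNIV"
  defines "h \<equiv> \<lambda>x. (\<Sum>\<^sub>\<infinity>y. b x y * (\<phi> x - \<phi> y)) * \<phi> x * (cmod (g x))\<^sup>2"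
  shows "(\<lambda>(x, y). b x y * (\<phi> x * (\<phi> x - \<phi> y) * (cmod (g x))\<^sup>2)) summable_on UNIV"
    and "h summable_on UNIV"
    and "(\<Sum>\<^sub>\<infinity>(x, y). b x y * (\<phi> x * (\<phi> x - \<phi> y) * (cmod (g x))\<^sup>2)) = infsum h UNIV"
proof -
  define Rl where "Rl = (\<lambda>(x, y). b x y * (\<phi> x * (\<phi> x - \<phi> y) * (cmod (g x))\<^sup>2))"
  have \<phi>_cross: "\<bar>\<phi> x * (\<phi> x - \<phi> y)\<bar> \<le> c\<^sup>2" for x y
  proof -
    have "\<bar>\<phi> x - \<phi> y\<bar> \<le> c"
      using \<phi>_pos[of x] \<phi>_pos[of y] \<phi>_le[of x] \<phi>_le[of y] by linarith
    then show ?thesis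
      unfolding abs_mult power2_eq_square using \<phi>_pos[of x] \<phi>_le[of x]
      by (intro mult_mono) auto
  qed
  have "(\<lambda>z. norm (Rl z)) summable_on UNIV"
  proof (rule summable_on_comparison_test)
    show "(\<lambda>z. c\<^sup>2 * (case z of (x, y) \<Rightarrow> b x y * (cmod (g x))\<^sup>2)) summable_on UNIV"
      using summable_edge_weighted[of b, OF b_nonneg b_summable degree _ g_l2]
      by (intro summable_on_cmult_right) simp
    have "b x y * (\<bar>\<phi> x * (\<phi> x - \<phi> y)\<bar> * (cmod (g x))\<^sup>2) \<le> b x y * (c\<^sup>2 * (cmod (g x))\<^sup>2)" for x y
      using \<phi>_cross b_nonneg by (intro mult_left_mono mult_right_mono) auto
    then show "norm (Rl z) \<le> c\<^sup>2 * (case z of (x, y) \<Rightarrow> b x y * (cmod (g x))\<^sup>2)" for z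
      by (simp add: Rl_def abs_mult b_nonneg mult_ac split: prod.splits)
  qed simp
  then show Rl_summable: "Rl summable_on UNIV"
    using summable_on_iff_abs_summable_on_real by blast
  have row: "((\<lambda>y. Rl (x, y)) has_sum h x) UNIV" for x
  proof -
    have "(\<lambda>y. b x y * \<phi> x) summable_on UNIV"
      using b_summable[of x] by (rule summable_on_cmult_left)
    moreover have "(\<lambda>y. - (b x y * \<phi> y)) summable_on UNIV"
      using \<phi>_summable[of x] by (simp add: summable_on_uminus)
    ultimately have "(\<lambda>y. b x y * (\<phi> x - \<phi> y)) summable_on UNIV"
      using summable_on_add by (fastforce simp: algebra_simps)
    then have "((\<lambda>y. b x y * (\<phi> x - \<phi> y)) has_sum (\<Sum>\<^sub>\<infinity>y. b x y * (\<phi> x - \<phi> y))) UNIV"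
      by (rule has_sum_infsum)
    from has_sum_cmult_left[OF this, of "\<phi> x * (cmod (g x))\<^sup>2"] show ?thesis
      by (simp add: Rl_def h_def mult_ac)
  qed
  have Rl_Sigma: "Rl summable_on Sigma UNIV (\<lambda>_. UNIV)"
    using Rl_summable by simp
  show "h summable_on UNIV"
    using summable_on_SigmaD[OF Rl_Sigma] row by (simp add: has_sum_iff)
  show "infsum Rl UNIV = infsum h UNIV"
    using infsum_Sigma_banach[OF Rl_Sigma] row by (simp add: has_sum_iff)
qed

lemma dirichlet_energy_ground_state_split:
  fixes f g :: "'a \<Rightarrow> complex"
  assumes b_nonneg: "\<And>x y. b x y \<ge> 0" and b_sym: "\<And>x y. b x y = b y x"
    and b_summable: "\<And>x. b x summable_on UNIV"
    and degree: "\<And>x. (\<Sum>\<^sub>\<infinity>y. b x y) \<le> C * m x"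
    and \<phi>_pos: "\<And>x. \<phi> x > 0" and \<phi>_le: "\<And>x. \<phi> x \<le> c"
    and \<phi>_summable: "\<And>x. (\<lambda>y. b x y * \<phi> y) summable_on UNIV"
    and f_eq: "\<And>x. f x = of_real (\<phi> x) * g x"
    and g_l2: "(\<lambda>x. (cmod (g x))\<^sup>2 * m x) summable_on UNIV"
  defines "h \<equiv> \<lambda>x. (\<Sum>\<^sub>\<infinity>y. b x y * (\<phi> x - \<phi> y)) * \<phi> x * (cmod (g x))\<^sup>2"
  shows "(\<lambda>(x, y). b x y * (\<phi> x * \<phi> y * (cmod (g x - g y))\<^sup>2)) summable_on UNIV"
    and "h summable_on UNIV"
    and "(\<Sum>\<^sub>\<infinity>(x, y). b x y * (cmod (f x - f y))\<^sup>2)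
           = (\<Sum>\<^sub>\<infinity>(x, y). b x y * (\<phi> x * \<phi> y * (cmod (g x - g y))\<^sup>2)) + 2 * infsum h UNIV"
proof -
  define Q where "Q = (\<lambda>(x, y). b x y * (\<phi> x * \<phi> y * (cmod (g x - g y))\<^sup>2))"
  define Rl where "Rl = (\<lambda>(x, y). b x y * (\<phi> x * (\<phi> x - \<phi> y) * (cmod (g x))\<^sup>2))"
  define Rr where "Rr = (\<lambda>(x, y). b x y * (\<phi> y * (\<phi> y - \<phi> x) * (cmod (g y))\<^sup>2))"
  note cross = ground_state_cross_term[of b, OF b_nonneg b_summable degree \<phi>_pos \<phi>_le \<phi>_summable
      g_l2, folded Rl_def h_def]
  show Q_summable: "Q summable_on UNIV"
  proof (rule summable_on_comparison_test)
    show "(\<lambda>z. c\<^sup>2 * (case z of (x, y) \<Rightarrow> b x y * (cmod (g x - g y))\<^sup>2)) summable_on UNIV"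
      using summable_dirichlet_energy[of b, OF b_nonneg b_sym b_summable degree g_l2]
      by (rule summable_on_cmult_right)
    have "\<phi> x * \<phi> y \<le> c\<^sup>2" for x y
      unfolding power2_eq_square using \<phi>_pos[of y] \<phi>_le[of x] \<phi>_le[of y]
      by (intro mult_mono) (auto simp: less_imp_le)
    then have "b x y * (\<phi> x * \<phi> y * (cmod (g x - g y))\<^sup>2) \<le> b x y * (c\<^sup>2 * (cmod (g x - g y))\<^sup>2)" for x y
      using b_nonneg by (intro mult_left_mono mult_right_mono) auto
    then show "Q z \<le> c\<^sup>2 * (case z of (x, y) \<Rightarrow> b x y * (cmod (g x - g y))\<^sup>2)" for z
      by (simp add: Q_def mult_ac split: prod.splits)
    show "0 \<le> Q z" for z
      using b_nonneg \<phi>_pos by (simp add: Q_def less_imp_le split: prod.splits)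
  qed
  show "h summable_on UNIV"
    by (rule cross(2))
  have "(Rl has_sum infsum Rl UNIV) (UNIV \<times> UNIV)"
    using cross(1) by (simp add: has_sum_infsum)
  then have "((\<lambda>(x, y). Rl (y, x)) has_sum infsum Rl UNIV) (UNIV \<times> UNIV)"
    using has_sum_swap by blast
  moreover have "(\<lambda>(x, y). Rl (y, x)) = Rr"
    using b_sym by (auto simp: Rl_def Rr_def fun_eq_iff)
  ultimately have "(Rr has_sum infsum Rl UNIV) UNIV"
    by simp
  then have Rr_summable: "Rr summable_on UNIV" and Rr_Rl: "infsum Rr UNIV = infsum Rl UNIV"
    by (auto simp: summable_on_def infsumI)
  have "(\<lambda>(x, y). b x y * (cmod (f x - f y))\<^sup>2) = (\<lambda>z. Q z + Rl z + Rr z)"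
    unfolding Q_def Rl_def Rr_def f_eq norm_of_real_mult_diff_sq
    by (auto simp: fun_eq_iff algebra_simps)
  then show "(\<Sum>\<^sub>\<infinity>(x, y). b x y * (cmod (f x - f y))\<^sup>2)
      = (\<Sum>\<^sub>\<infinity>(x, y). b x y * (\<phi> x * \<phi> y * (cmod (g x - g y))\<^sup>2)) + 2 * infsum h UNIV"
    using Q_summable cross(1,3) Rr_summable Rr_Rl by (simp add: Q_def infsum_add summable_on_add)
qed

lemma ground_state_transform:
  fixes f g :: "'a \<Rightarrow> complex"
  assumes b_nonneg: "\<And>x y. b x y \<ge> 0" and b_sym: "\<And>x y. b x y = b y x"
    and b_summable: "\<And>x. b x summable_on UNIV"
    and degree: "\<And>x. (\<Sum>\<^sub>\<infinity>y. b x y) \<le> C * m x" and m_pos: "\<And>x. m x > 0"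
    and \<phi>_pos: "\<And>x. \<phi> x > 0" and \<phi>_le: "\<And>x. \<phi> x \<le> c"
    and \<phi>_summable: "\<And>x. (\<lambda>y. b x y * \<phi> y) summable_on UNIV"
    and supersolution: "\<And>x. (1 / m x) * ((\<Sum>\<^sub>\<infinity>y. b x y * (\<phi> x - \<phi> y)) + V x * \<phi> x) - lam * \<phi> x \<ge> 0"
    and f_eq: "\<And>x. f x = of_real (\<phi> x) * g x"
    and f_l2: "(\<lambda>x. (cmod (f x))\<^sup>2 * m x) summable_on UNIV"
    and g_l2: "(\<lambda>x. (cmod (g x))\<^sup>2 * m x) summable_on UNIV"
    and V_summable: "(\<lambda>x. V x * (cmod (f x))\<^sup>2) summable_on UNIV"
  shows "lam * l2_norm_sq m f + (1 / 2) * (\<Sum>\<^sub>\<infinity>(x, y). b x y * (\<phi> x * \<phi> y * (cmod (g x - g y))\<^sup>2))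
           \<le> energy_V b V f"
proof -
  define h where "h x = (\<Sum>\<^sub>\<infinity>y. b x y * (\<phi> x - \<phi> y)) * \<phi> x * (cmod (g x))\<^sup>2" for x
  note energy_split = dirichlet_energy_ground_state_split[of b, OF b_nonneg b_sym b_summable degree
      \<phi>_pos \<phi>_le \<phi>_summable f_eq g_l2, folded h_def]
  have pointwise: "lam * ((cmod (f x))\<^sup>2 * m x) \<le> h x + V x * (cmod (f x))\<^sup>2" for x
  proof -
    have "h x + V x * (cmod (f x))\<^sup>2 - lam * ((cmod (f x))\<^sup>2 * m x)
        = \<phi> x * (cmod (g x))\<^sup>2 * m x
          * ((1 / m x) * ((\<Sum>\<^sub>\<infinity>y. b x y * (\<phi> x - \<phi> y)) + V x * \<phi> x) - lam * \<phi> x)"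
      using m_pos[of x] \<phi>_pos[of x]
      by (simp add: h_def f_eq norm_mult power_mult_distrib field_simps power2_eq_square)
    also have "\<dots> \<ge> 0"
      using \<phi>_pos[of x] m_pos[of x] supersolution[of x] by (simp add: less_imp_le)
    finally show ?thesis
      by simp
  qed
  have "lam * l2_norm_sq m f = (\<Sum>\<^sub>\<infinity>x. lam * ((cmod (f x))\<^sup>2 * m x))"
    by (simp add: l2_norm_sq_def infsum_cmult_right')
  also have "\<dots> \<le> (\<Sum>\<^sub>\<infinity>x. h x + V x * (cmod (f x))\<^sup>2)"
    using f_l2 energy_split(2) V_summable pointwise
    by (intro infsum_mono summable_on_add summable_on_cmult_right)
  also have "\<dots> = infsum h UNIV + (\<Sum>\<^sub>\<infinity>x. V x * (cmod (f x))\<^sup>2)"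
    using energy_split(2) V_summable by (rule infsum_add)
  finally show ?thesis
    using energy_split(3) unfolding energy_V_def by linarith
qed

lemma norm_sq_scaled_bounds:
  fixes u :: complex
  assumes "c > 0" and "1 / c \<le> p" and "p \<le> c"
  shows "(cmod (of_real p * u))\<^sup>2 \<le> c\<^sup>2 * (cmod u)\<^sup>2" and "(cmod u)\<^sup>2 \<le> c\<^sup>2 * (cmod (of_real p * u))\<^sup>2"
proof -
  have "p > 0" "1 \<le> c * p"
    using assms by (auto simp: field_simps intro: less_le_trans[of 0 "1 / c"])
  then have "p\<^sup>2 \<le> c\<^sup>2" "1 \<le> (c * p)\<^sup>2"
    using assms(3) by (auto intro: power_mono one_le_power)
  have norm_scaled: "(cmod (of_real p * u))\<^sup>2 = p\<^sup>2 * (cmod u)\<^sup>2"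
    by (simp add: norm_mult power_mult_distrib)
  show "(cmod (of_real p * u))\<^sup>2 \<le> c\<^sup>2 * (cmod u)\<^sup>2"
    unfolding norm_scaled using \<open>p\<^sup>2 \<le> c\<^sup>2\<close> by (rule mult_right_mono) simp
  show "(cmod u)\<^sup>2 \<le> c\<^sup>2 * (cmod (of_real p * u))\<^sup>2"
    unfolding norm_scaled using mult_right_mono[OF \<open>1 \<le> (c * p)\<^sup>2\<close>, of "(cmod u)\<^sup>2"]
    by (simp add: power_mult_distrib mult_ac)
qed

lemma dirichlet_energy_le_weighted:
  fixes g :: "'a \<Rightarrow> 'b::real_normed_vector"
  assumes b_nonneg: "\<And>x y. b x y \<ge> 0" and \<phi>_lower: "\<And>x. 1 / c \<le> \<phi> x" and "c > 0"
    and "(\<lambda>(x, y). b x y * (norm (g x - g y))\<^sup>2) summable_on UNIV"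
    and "(\<lambda>(x, y). b x y * (\<phi> x * \<phi> y * (norm (g x - g y))\<^sup>2)) summable_on UNIV"
  shows "1 / c\<^sup>2 * (\<Sum>\<^sub>\<infinity>(x, y). b x y * (norm (g x - g y))\<^sup>2)
           \<le> (\<Sum>\<^sub>\<infinity>(x, y). b x y * (\<phi> x * \<phi> y * (norm (g x - g y))\<^sup>2))"
  unfolding infsum_cmult_right'[symmetric]
proof (rule infsum_mono)
  show "(\<lambda>z. 1 / c\<^sup>2 * (case z of (x, y) \<Rightarrow> b x y * (norm (g x - g y))\<^sup>2)) summable_on UNIV"
    using assms(4) by (rule summable_on_cmult_right)
  have "1 / c\<^sup>2 \<le> \<phi> x * \<phi> y" for x y
    using mult_mono[OF \<phi>_lower[of x] \<phi>_lower[of y]] order.trans[OF _ \<phi>_lower[of x]] \<open>c > 0\<close>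
    by (simp add: power2_eq_square)
  then have "b x y * (1 / c\<^sup>2 * (norm (g x - g y))\<^sup>2) \<le> b x y * (\<phi> x * \<phi> y * (norm (g x - g y))\<^sup>2)"
    for x y
    using b_nonneg[of x y] by (intro mult_left_mono mult_right_mono) auto
  then show "1 / c\<^sup>2 * (case z of (x, y) \<Rightarrow> b x y * (norm (g x - g y))\<^sup>2)
      \<le> (case z of (x, y) \<Rightarrow> b x y * (\<phi> x * \<phi> y * (norm (g x - g y))\<^sup>2))" for z
    by (simp add: mult.left_commute split: prod.splits)
qed (use assms(5) in simp)

lemma regular_ground_state_transform:
  fixes f :: "'a::countable \<Rightarrow> complex"
  assumes graph: "weighted_graph b m" and degree: "\<And>x. (\<Sum>\<^sub>\<infinity>y. b x y) \<le> C * m x"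
    and rgs: "regular_ground_state b m V \<phi> c"
    and f_l2: "(\<lambda>x. (cmod (f x))\<^sup>2 * m x) summable_on UNIV"
    and V_summable: "(\<lambda>x. V x * (cmod (f x))\<^sup>2) summable_on UNIV"
  defines "g \<equiv> \<lambda>x. f x / of_real (\<phi> x)"
  shows "(\<lambda>x. (cmod (g x))\<^sup>2 * m x) summable_on UNIV"
    and "(\<lambda>(x, y). b x y * (cmod (g x - g y))\<^sup>2) summable_on UNIV"
    and "l2_norm_sq m f \<le> c\<^sup>2 * (\<Sum>\<^sub>\<infinity>x. (cmod (g x))\<^sup>2 * m x)"
    and "lambda_V b m V * l2_norm_sq m f + 1 / (2 * c\<^sup>2) * (\<Sum>\<^sub>\<infinity>(x, y). b x y * (cmod (g x - g y))\<^sup>2)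
           \<le> energy_V b V f"
proof -
  have b_nonneg: "\<And>x y. b x y \<ge> 0" and b_sym: "\<And>x y. b x y = b y x"
    and b_summable: "\<And>x. b x summable_on UNIV" and m_pos: "\<And>x. m x > 0"
    using graph unfolding weighted_graph_def by auto
  have \<phi>_pos: "\<And>x. \<phi> x > 0" and \<phi>_summable: "\<And>x. (\<lambda>y. b x y * \<phi> y) summable_on UNIV"
    and supersolution: "\<And>x. (1 / m x) * ((\<Sum>\<^sub>\<infinity>y. b x y * (\<phi> x - \<phi> y)) + V x * \<phi> x)
                               - lambda_V b m V * \<phi> x \<ge> 0"
    and \<phi>_lower: "\<And>x. 1 / c \<le> \<phi> x" and \<phi>_le: "\<And>x. \<phi> x \<le> c" and "c \<ge> 1"
    using rgs unfolding regular_ground_state_def ground_state_def by auto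
  have f_eq: "f x = of_real (\<phi> x) * g x" for x
    using \<phi>_pos[of x] by (simp add: g_def)
  have "c > 0"
    using \<open>c \<ge> 1\<close> by simp
  have norm_bounds: "(cmod (f x))\<^sup>2 \<le> c\<^sup>2 * (cmod (g x))\<^sup>2" "(cmod (g x))\<^sup>2 \<le> c\<^sup>2 * (cmod (f x))\<^sup>2"
    for x
    unfolding f_eq using norm_sq_scaled_bounds[OF \<open>c > 0\<close> \<phi>_lower[of x] \<phi>_le[of x]] by auto
  show g_l2: "(\<lambda>x. (cmod (g x))\<^sup>2 * m x) summable_on UNIV"
  proof (rule summable_on_comparison_test)
    show "(\<lambda>x. c\<^sup>2 * ((cmod (f x))\<^sup>2 * m x)) summable_on UNIV"
      using f_l2 by (rule summable_on_cmult_right)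
    show "(cmod (g x))\<^sup>2 * m x \<le> c\<^sup>2 * ((cmod (f x))\<^sup>2 * m x)" for x
      using mult_right_mono[OF norm_bounds(2) less_imp_le[OF m_pos]] by (simp add: mult_ac)
  qed (use m_pos in \<open>simp add: less_imp_le\<close>)
  show W_summable: "(\<lambda>(x, y). b x y * (cmod (g x - g y))\<^sup>2) summable_on UNIV"
    using summable_dirichlet_energy[of b, OF b_nonneg b_sym b_summable degree g_l2] .
  show "l2_norm_sq m f \<le> c\<^sup>2 * (\<Sum>\<^sub>\<infinity>x. (cmod (g x))\<^sup>2 * m x)"
    unfolding l2_norm_sq_def infsum_cmult_right'[symmetric]
  proof (rule infsum_mono)
    show "(\<lambda>x. c\<^sup>2 * ((cmod (g x))\<^sup>2 * m x)) summable_on UNIV"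
      using g_l2 by (rule summable_on_cmult_right)
    show "(cmod (f x))\<^sup>2 * m x \<le> c\<^sup>2 * ((cmod (g x))\<^sup>2 * m x)" for x
      using mult_right_mono[OF norm_bounds(1) less_imp_le[OF m_pos]] by (simp add: mult_ac)
  qed (rule f_l2)
  have "1 / c\<^sup>2 * (\<Sum>\<^sub>\<infinity>(x, y). b x y * (cmod (g x - g y))\<^sup>2)
      \<le> (\<Sum>\<^sub>\<infinity>(x, y). b x y * (\<phi> x * \<phi> y * (cmod (g x - g y))\<^sup>2))"
    using dirichlet_energy_ground_state_split(1)[of b, OF b_nonneg b_sym b_summable degree
        \<phi>_pos \<phi>_le \<phi>_summable f_eq g_l2]
    by (intro dirichlet_energy_le_weighted[OF b_nonneg \<phi>_lower \<open>c > 0\<close> W_summable])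
  with ground_state_transform[of b, OF b_nonneg b_sym b_summable degree m_pos \<phi>_pos \<phi>_le
      \<phi>_summable supersolution f_eq f_l2 g_l2 V_summable]
  show "lambda_V b m V * l2_norm_sq m f
      + 1 / (2 * c\<^sup>2) * (\<Sum>\<^sub>\<infinity>(x, y). b x y * (cmod (g x - g y))\<^sup>2) \<le> energy_V b V f"
    by simp
qed

lemma weight_le_degree:
  fixes b :: "'a \<Rightarrow> 'b \<Rightarrow> real"
  assumes "\<And>x y. b x y \<ge> 0" and "b x summable_on UNIV"
  shows "b x y \<le> (\<Sum>\<^sub>\<infinity>y. b x y)"
  using finite_sum_le_infsum[of "b x" UNIV "{y}"] assms by simp

lemma cond_B_degree_bound:
  assumes "weighted_graph b m" and "cond_B b m"
  obtains C where "\<And>x. (\<Sum>\<^sub>\<infinity>y. b x y) \<le> C * m x"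
proof -
  obtain C where "\<And>x. (\<Sum>\<^sub>\<infinity>y. b x y) / m x \<le> C"
    using assms(2) unfolding cond_B_def by blast
  moreover have "\<And>x. m x > 0"
    using assms(1) unfolding weighted_graph_def by blast
  ultimately show thesis
    using that[of C] by (simp add: divide_le_eq mult.commute)
qed

lemma bounded_weights:
  assumes "weighted_graph b m" and "cond_B b m" and "cond_M m"
  obtains K where "K > 0" and "\<And>x y. b x y \<le> K"
proof -
  obtain C where degree: "\<And>x. (\<Sum>\<^sub>\<infinity>y. b x y) \<le> C * m x"
    using cond_B_degree_bound[OF assms(1,2)] by blast
  obtain M where M: "\<And>x. m x \<le> M"
    using assms(3) unfolding cond_M_def by blast
  have "b x y \<le> \<bar>C\<bar> * \<bar>M\<bar> + 1" for x y
  proof -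
    have "m x > 0"
      using assms(1) unfolding weighted_graph_def by blast
    have "b x y \<le> C * m x"
      using weight_le_degree[of b x y] degree[of x] assms(1) unfolding weighted_graph_def by force
    also have "\<dots> \<le> \<bar>C\<bar> * m x"
      using \<open>m x > 0\<close> by (intro mult_right_mono) auto
    also have "\<dots> \<le> \<bar>C\<bar> * \<bar>M\<bar>"
      using M[of x] by (intro mult_left_mono) auto
    finally show ?thesis
      by simp
  qed
  then show thesis
    using that[of "\<bar>C\<bar> * \<bar>M\<bar> + 1"] by (simp add: add_nonneg_pos)
qed

lemma connecting_paths_mass_lower_bound:
  assumes b_nonneg: "\<And>x y. b x y \<ge> 0" and b_sym: "\<And>x y. b x y = b y x"
    and b_summable: "\<And>x. b x summable_on UNIV"
    and degree: "\<And>x. (\<Sum>\<^sub>\<infinity>y. b x y) \<le> C * m x"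
    and paths: "connecting_paths b D R \<gamma>" and "x \<notin> D"
  shows "1 \<le> R * C * m x"
proof -
  have \<gamma>: "is_path b (\<gamma> x)" "hd (\<gamma> x) \<in> D" "last (\<gamma> x) = x" "path_length b (\<gamma> x) \<le> R"
    using paths \<open>x \<notin> D\<close> unfolding connecting_paths_def by auto
  then have "tl (\<gamma> x) \<noteq> []"
    using \<open>x \<notin> D\<close> by (cases "\<gamma> x") (auto simp: is_path_def)
  then obtain xs y where "\<gamma> x = xs @ [y, x]" and "b y x > 0"
    using path_last_edge[OF \<gamma>(1)] \<gamma>(3) by metis
  then have edge_le: "1 / b y x \<le> R"
    using path_length_ge_last_edge[of b y x xs, OF b_nonneg] \<gamma>(4) by simp
  moreover have "1 / b y x > 0"
    using \<open>b y x > 0\<close> by simp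
  ultimately have "R \<ge> 0"
    by linarith
  have "1 \<le> R * b y x"
    using edge_le \<open>b y x > 0\<close> by (simp add: divide_le_eq)
  also have "R * b y x \<le> R * (C * m x)"
    using weight_le_degree[of b x y, OF b_nonneg b_summable] degree[of x] b_sym[of y x] \<open>R \<ge> 0\<close>
    by (intro mult_left_mono) auto
  finally show ?thesis
    by (simp add: mult_ac)
qed

text \<open>Since m need not be bounded below, this is what makes the potential term of
  energy_V an absolutely convergent sum.\<close>

lemma connecting_paths_square_summable:
  fixes f :: "'a \<Rightarrow> 'b::real_normed_vector"
  assumes "\<And>x y. b x y \<ge> 0" and "\<And>x y. b x y = b y x" and "\<And>x. b x summable_on UNIV"
    and "\<And>x. (\<Sum>\<^sub>\<infinity>y. b x y) \<le> C * m x" and "connecting_paths b D R \<gamma>"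
    and f_l2: "(\<lambda>x. (norm (f x))\<^sup>2 * m x) summable_on UNIV" and f_D: "\<And>x. x \<in> D \<Longrightarrow> f x = 0"
  shows "(\<lambda>x. (norm (f x))\<^sup>2) summable_on UNIV"
proof (rule summable_on_comparison_test)
  show "(\<lambda>x. R * C * ((norm (f x))\<^sup>2 * m x)) summable_on UNIV"
    using f_l2 by (rule summable_on_cmult_right)
  show "(norm (f x))\<^sup>2 \<le> R * C * ((norm (f x))\<^sup>2 * m x)" for x
  proof (cases "x \<in> D")
    case False
    with connecting_paths_mass_lower_bound[OF assms(1-5)] show ?thesis
      using mult_left_mono[of 1 "R * C * m x" "(norm (f x))\<^sup>2"] by (simp add: mult_ac)
  qed (simp add: f_D)
qed simp

lemma summable_on_bounded_mult:
  fixes V h :: "'a \<Rightarrow> real"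
  assumes "bounded (range V)" and "h summable_on UNIV" and "\<And>x. h x \<ge> 0"
  shows "(\<lambda>x. V x * h x) summable_on UNIV"
proof -
  obtain B where B: "\<And>x. \<bar>V x\<bar> \<le> B"
    using assms(1) unfolding bounded_iff by auto
  have "(\<lambda>x. norm (V x * h x)) summable_on UNIV"
  proof (rule summable_on_comparison_test)
    show "(\<lambda>x. B * h x) summable_on UNIV"
      using assms(2) by (rule summable_on_cmult_right)
    show "norm (V x * h x) \<le> B * h x" for x
      using mult_right_mono[OF B assms(3)] assms(3)[of x] by (simp add: abs_mult)
  qed simp
  then show ?thesis
    using summable_on_iff_abs_summable_on_real by blast
qed

text \<open>If R vol[c^2 R] = 0, which includes the case of infinite volume (enn2real maps \<infinity> to 0),
  the gap term 1 / (c^4 R vol[c^2 R]) is 0 by division by zero, and only E \<ge> \<lambda> F remains.\<close>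

lemma energy_lower_bound_from_hardy:
  fixes E lam F G S c R Vol :: real
  assumes transform: "lam * F + 1 / (2 * c\<^sup>2) * S \<le> E" and F_le: "F \<le> c\<^sup>2 * G"
    and hardy: "0 < R * Vol \<Longrightarrow> G \<le> R * Vol / 2 * S"
    and "c > 0" and "S \<ge> 0" and "R \<ge> 0" and "Vol \<ge> 0"
  shows "(lam + 1 / (c ^ 4 * R * Vol)) * F \<le> E"
proof (cases "R * Vol = 0")
  case True
  then have "(lam + 1 / (c ^ 4 * R * Vol)) * F = lam * F"
    by (simp add: mult.assoc)
  moreover have "0 \<le> 1 / (2 * c\<^sup>2) * S"
    using \<open>S \<ge> 0\<close> by simp
  ultimately show ?thesis
    using transform by linarith
next
  case False
  with \<open>R \<ge> 0\<close> \<open>Vol \<ge> 0\<close> have "0 < R * Vol"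
    by (simp add: less_le)
  with F_le hardy have "F \<le> c\<^sup>2 * (R * Vol / 2 * S)"
    by (meson order.trans mult_left_mono zero_le_power2)
  moreover have "0 < c ^ 4 * R * Vol"
    using \<open>0 < R * Vol\<close> \<open>c > 0\<close> by (simp add: mult.assoc)
  ultimately have "F / (c ^ 4 * R * Vol) \<le> c\<^sup>2 * (R * Vol / 2 * S) / (c ^ 4 * R * Vol)"
    by (intro divide_right_mono) auto
  also have "\<dots> = 1 / (2 * c\<^sup>2) * S"
    using False \<open>c > 0\<close> by (simp add: field_simps power4_eq_xxxx power2_eq_square)
  finally have "F / (c ^ 4 * R * Vol) \<le> 1 / (2 * c\<^sup>2) * S" .
  with transform show ?thesis
    by (simp add: distrib_right)
qed

theorem theorem7p1:
  fixes b :: "'a::countable \<Rightarrow> 'a \<Rightarrow> real" and m V :: "'a \<Rightarrow> real"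
    and D :: "'a set" and \<phi> :: "'a \<Rightarrow> real" and c :: real and f :: "'a \<Rightarrow> complex"
  assumes "weighted_graph b m" and "graph_connected b"
    and "cond_B b m" and "cond_M m"
    and "bounded (range V)"
    and "rel_dense b D"
    and "regular_ground_state b m V \<phi> c"
    and "f \<in> l2 m" and "\<forall>x\<in>D. f x = 0"
  shows "energy_V b V f \<ge>
    (lambda_V b m V + 1 / (c ^ 4 * covering_radius b D *
        enn2real (vol_sup b m (c\<^sup>2 * covering_radius b D)))) * l2_norm_sq m f"
proof -
  have b_nonneg: "\<And>x y. b x y \<ge> 0" and b_sym: "\<And>x y. b x y = b y x"
    and b_summable: "\<And>x. b x summable_on UNIV" and m_pos: "\<And>x. m x > 0"
    using assms(1) unfolding weighted_graph_def by auto
  obtain C where degree: "\<And>x. (\<Sum>\<^sub>\<infinity>y. b x y) \<le> C * m x"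
    using cond_B_degree_bound[OF assms(1,3)] by blast
  obtain K where "K > 0" and "\<And>x y. b x y \<le> K"
    using bounded_weights[OF assms(1,3,4)] by blast
  define R where "R = covering_radius b D"
  define Vol where "Vol = enn2real (vol_sup b m (c\<^sup>2 * R))"
  have "R \<ge> 0" and "R \<le> c\<^sup>2 * R" and "Vol \<ge> 0" and "c > 0"
    using covering_radius_nonneg[OF assms(6)] assms(7)
    by (auto simp: R_def Vol_def regular_ground_state_def mult_le_cancel_right1 one_le_power)
  obtain \<gamma> where paths: "connecting_paths b D R \<gamma>"
    using connecting_paths_exist[OF b_nonneg b_sym b_summable \<open>\<And>x y. b x y \<le> K\<close> \<open>K > 0\<close> assms(2,6)]
    unfolding R_def by blast
  have f_l2: "(\<lambda>x. (cmod (f x))\<^sup>2 * m x) summable_on UNIV"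
    using assms(8) unfolding l2_def by simp
  have V_summable: "(\<lambda>x. V x * (cmod (f x))\<^sup>2) summable_on UNIV"
    using summable_on_bounded_mult[OF assms(5) connecting_paths_square_summable[of b,
          OF b_nonneg b_sym b_summable degree paths f_l2]] assms(9) by simp
  define g where "g x = f x / of_real (\<phi> x)" for x
  note transform = regular_ground_state_transform[OF assms(1) degree assms(7) f_l2 V_summable,
      folded g_def]
  have "(\<Sum>\<^sub>\<infinity>x. (cmod (g x))\<^sup>2 * m x) \<le> R * Vol / 2 * (\<Sum>\<^sub>\<infinity>(x, y). b x y * (cmod (g x - g y))\<^sup>2)"
    if "0 < R * Vol"
    unfolding Vol_def
  proof (rule hardy_inequality_vol_sup[OF b_nonneg b_sym _ \<open>R \<ge> 0\<close> \<open>R \<le> c\<^sup>2 * R\<close> _ paths])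
    show "vol_sup b m (c\<^sup>2 * R) < top"
      using that unfolding Vol_def by (cases "vol_sup b m (c\<^sup>2 * R) = top") (auto simp: top.not_eq_extremum)
  qed (use less_imp_le[OF m_pos] assms(9) transform(1,2) g_def in auto)
  then have "(lambda_V b m V + 1 / (c ^ 4 * R * Vol)) * l2_norm_sq m f \<le> energy_V b V f"
    using b_nonneg
    by (intro energy_lower_bound_from_hardy[OF transform(4,3) _ \<open>c > 0\<close> _ \<open>R \<ge> 0\<close> \<open>Vol \<ge> 0\<close>])
      (auto intro: infsum_nonneg)
  then show ?thesis
    unfolding R_def Vol_def .
qed

end
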